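(* Let $G$ be a compact, simply connected, semisimple Lie group, let $0<q<1$, and let $Y\subseteq\mathbf{P}^+$ be a finite generating set for $R(G_q)$. Then $\omega_Y(R(G_q))=\max_{\lambda\in Y}q^{-4\langle\lambda|\rho\rangle}$.
   Context: For $G$ with positive roots $\Phi^+$, dominant integral weights $\mathbf{P}^+$, Weyl vector $\rho$, longest Weyl group element $w_\circ$, and $W$-invariant inner product $\langle\cdot|\cdot\rangle$ normalised so that short roots have square length $2$: $R(G_q)$ is the fusion algebra of the $q$-deformation $G_q$, with irreducibles $\mathbf{P}^+$, unit $0$, structure constants equal to tensor product multiplicities of irreducible representations of $G$, involution $\bar\lambda=-w_\circ\lambda$, and quantum dimension $d(\lambda)=\prod_{\alpha\in\Phi^+}\frac{[\langle\lambda+\rho|\alpha\rangle]_q}{[\langle\rho|\alpha\rangle]_q}$ with $[x]_q=\frac{q^{-x}-q^x}{q^{-1}-q}$. A finite generating set is a finite $Y\subseteq\mathbf{P}^+$ with $\bar Y=Y$ such that every $\lambda\in\mathbf{P}^+$ occurs in some tensor product $\lambda_1\otimes\cdots\otimes\lambda_n$, $\lambda_i\in Y$; $\ell_Y(\lambda)$ is the least such $n$ ($\ell_Y(0)=0$); $B_Y(n)=\{\lambda:\ell_Y(\lambda)\le n\}$, $|B_Y(n)|=\sum_{\lambda\in B_Y(n)}d(\lambda)^2$, and $\omega_Y(R(G_q))=\lim_{n}|B_Y(n)|^{1/n}$. *)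

theory Defs
  imports "HOL-Analysis.Analysis"
begin

text \<open>Combinatorial model of a compact simply connected semisimple Lie group G:
  its (reduced, crystallographic) root system \<Phi> spanning a Euclidean space,
  with positive system determined by a regular vector t.\<close>

definition refl_vec :: "'a::euclidean_space \<Rightarrow> 'a \<Rightarrow> 'a" where
  "refl_vec \<alpha> v = v - (2 * (v \<bullet> \<alpha>) / (\<alpha> \<bullet> \<alpha>)) *\<^sub>R \<alpha>"

definition root_system :: "'a::euclidean_space set \<Rightarrow> bool" where
  "root_system \<Phi> \<longleftrightarrow> finite \<Phi> \<and> 0 \<notin> \<Phi> \<and> span \<Phi> = UNIV \<and>
     (\<forall>\<alpha>\<in>\<Phi>. \<forall>\<beta>\<in>\<Phi>. refl_vec \<alpha> \<beta> \<in> \<Phi>) \<and>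
     (\<forall>\<alpha>\<in>\<Phi>. \<forall>\<beta>\<in>\<Phi>. 2 * (\<beta> \<bullet> \<alpha>) / (\<alpha> \<bullet> \<alpha>) \<in> \<int>) \<and>
     (\<forall>\<alpha>\<in>\<Phi>. \<forall>c::real. c *\<^sub>R \<alpha> \<in> \<Phi> \<longrightarrow> c = 1 \<or> c = -1)"

text \<open>Two roots lie in the same simple factor iff they are linked by a chain of
  non-orthogonal roots.\<close>
definition root_linked :: "'a::euclidean_space set \<Rightarrow> 'a \<Rightarrow> 'a \<Rightarrow> bool" where
  "root_linked \<Phi> = (\<lambda>x y. x \<in> \<Phi> \<and> y \<in> \<Phi> \<and> x \<bullet> y \<noteq> 0)\<^sup>*\<^sup>*"

text \<open>Normalisation: short roots (of each simple factor) have square length 2.\<close>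
definition short_normalised :: "'a::euclidean_space set \<Rightarrow> bool" where
  "short_normalised \<Phi> \<longleftrightarrow>
     (\<forall>\<alpha>\<in>\<Phi>. (\<forall>\<beta>\<in>\<Phi>. root_linked \<Phi> \<alpha> \<beta> \<longrightarrow> \<alpha> \<bullet> \<alpha> \<le> \<beta> \<bullet> \<beta>) \<longrightarrow> \<alpha> \<bullet> \<alpha> = 2)"

definition regular :: "'a::euclidean_space set \<Rightarrow> 'a \<Rightarrow> bool" where
  "regular \<Phi> t \<longleftrightarrow> (\<forall>\<alpha>\<in>\<Phi>. \<alpha> \<bullet> t \<noteq> 0)"

definition pos_roots :: "'a::euclidean_space set \<Rightarrow> 'a \<Rightarrow> 'a set" where
  "pos_roots \<Phi> t = {\<alpha> \<in> \<Phi>. \<alpha> \<bullet> t > 0}"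

definition weyl_vec :: "'a::euclidean_space set \<Rightarrow> 'a \<Rightarrow> 'a" where
  "weyl_vec \<Phi> t = (1/2) *\<^sub>R (\<Sum>\<alpha>\<in>pos_roots \<Phi> t. \<alpha>)"

definition weights :: "'a::euclidean_space set \<Rightarrow> 'a set" where
  "weights \<Phi> = {l. \<forall>\<alpha>\<in>\<Phi>. 2 * (l \<bullet> \<alpha>) / (\<alpha> \<bullet> \<alpha>) \<in> \<int>}"

definition dominant :: "'a::euclidean_space set \<Rightarrow> 'a \<Rightarrow> 'a set" where
  "dominant \<Phi> t = {l \<in> weights \<Phi>. \<forall>\<alpha>\<in>pos_roots \<Phi> t. l \<bullet> \<alpha> \<ge> 0}"

inductive_set weyl_group :: "'a::euclidean_space set \<Rightarrow> ('a \<Rightarrow> 'a) set" for \<Phi> where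
  weyl_id: "id \<in> weyl_group \<Phi>"
| weyl_step: "w \<in> weyl_group \<Phi> \<Longrightarrow> \<alpha> \<in> \<Phi> \<Longrightarrow> refl_vec \<alpha> \<circ> w \<in> weyl_group \<Phi>"

text \<open>Sign of a Weyl group element: (-1)^(length), length = number of positive
  roots sent to negative roots.\<close>
definition weyl_sign :: "'a::euclidean_space set \<Rightarrow> 'a \<Rightarrow> ('a \<Rightarrow> 'a) \<Rightarrow> int" where
  "weyl_sign \<Phi> t w = (-1) ^ card {\<alpha> \<in> pos_roots \<Phi> t. w \<alpha> \<notin> pos_roots \<Phi> t}"

definition longest :: "'a::euclidean_space set \<Rightarrow> 'a \<Rightarrow> 'a \<Rightarrow> 'a" where
  "longest \<Phi> t = (THE w. w \<in> weyl_group \<Phi> \<and> w ` pos_roots \<Phi> t = uminus ` pos_roots \<Phi> t)"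

text \<open>Involution of the fusion algebra: \<open>\<bar>\<lambda> = -w\<^sub>0 \<lambda>\<close>.\<close>
definition dual_wt :: "'a::euclidean_space set \<Rightarrow> 'a \<Rightarrow> 'a \<Rightarrow> 'a" where
  "dual_wt \<Phi> t l = - longest \<Phi> t l"

definition kpf :: "'a::euclidean_space set \<Rightarrow> 'a \<Rightarrow> 'a \<Rightarrow> nat" where
  "kpf \<Phi> t \<beta> = card {c :: 'a \<Rightarrow> nat. (\<forall>\<alpha>. \<alpha> \<notin> pos_roots \<Phi> t \<longrightarrow> c \<alpha> = 0) \<and>
                        (\<Sum>\<alpha>\<in>pos_roots \<Phi> t. real (c \<alpha>) *\<^sub>R \<alpha>) = \<beta>}"

text \<open>Multiplicity of the irreducible \<open>\<nu>\<close> in \<open>\<lambda> \<otimes> \<mu>\<close> (Steinberg's formula).\<close>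
definition tensor_mult :: "'a::euclidean_space set \<Rightarrow> 'a \<Rightarrow> 'a \<Rightarrow> 'a \<Rightarrow> 'a \<Rightarrow> int" where
  "tensor_mult \<Phi> t l m n =
     (\<Sum>w\<in>weyl_group \<Phi>. \<Sum>w'\<in>weyl_group \<Phi>.
        weyl_sign \<Phi> t w * weyl_sign \<Phi> t w' *
        int (kpf \<Phi> t (w (l + weyl_vec \<Phi> t) + w' (m + weyl_vec \<Phi> t)
                       - (n + 2 *\<^sub>R weyl_vec \<Phi> t))))"

text \<open>Irreducibles occurring in some n-fold tensor product of elements of Y.\<close>
fun products :: "'a::euclidean_space set \<Rightarrow> 'a \<Rightarrow> 'a set \<Rightarrow> nat \<Rightarrow> 'a set" where
  "products \<Phi> t Y 0 = {0}"
| "products \<Phi> t Y (Suc n) = {v \<in> dominant \<Phi> t. \<exists>m\<in>products \<Phi> t Y n. \<exists>y\<in>Y. tensor_mult \<Phi> t m y v > 0}"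

definition generating_set :: "'a::euclidean_space set \<Rightarrow> 'a \<Rightarrow> 'a set \<Rightarrow> bool" where
  "generating_set \<Phi> t Y \<longleftrightarrow> finite Y \<and> Y \<subseteq> dominant \<Phi> t \<and> dual_wt \<Phi> t ` Y = Y \<and>
     (\<forall>l\<in>dominant \<Phi> t. \<exists>n. l \<in> products \<Phi> t Y n)"

definition word_length :: "'a::euclidean_space set \<Rightarrow> 'a \<Rightarrow> 'a set \<Rightarrow> 'a \<Rightarrow> nat" where
  "word_length \<Phi> t Y l = (LEAST n. l \<in> products \<Phi> t Y n)"

definition ball_set :: "'a::euclidean_space set \<Rightarrow> 'a \<Rightarrow> 'a set \<Rightarrow> nat \<Rightarrow> 'a set" where
  "ball_set \<Phi> t Y n = {l \<in> dominant \<Phi> t. (\<exists>k. l \<in> products \<Phi> t Y k) \<and> word_length \<Phi> t Y l \<le> n}"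

definition qint :: "real \<Rightarrow> real \<Rightarrow> real" where
  "qint q x = (q powr (-x) - q powr x) / (q powr (-1) - q)"

definition qdim :: "'a::euclidean_space set \<Rightarrow> 'a \<Rightarrow> real \<Rightarrow> 'a \<Rightarrow> real" where
  "qdim \<Phi> t q l = (\<Prod>\<alpha>\<in>pos_roots \<Phi> t.
      qint q ((l + weyl_vec \<Phi> t) \<bullet> \<alpha>) / qint q (weyl_vec \<Phi> t \<bullet> \<alpha>))"

definition ball_size :: "'a::euclidean_space set \<Rightarrow> 'a \<Rightarrow> real \<Rightarrow> 'a set \<Rightarrow> nat \<Rightarrow> real" where
  "ball_size \<Phi> t q Y n = (\<Sum>l\<in>ball_set \<Phi> t Y n. (qdim \<Phi> t q l)\<^sup>2)"

end

theory Submission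
  imports Defs
begin

text \<open>
  Everything is controlled by the pairing with \<open>2\<rho>\<close>, the sum of the positive roots.
  Weyl group elements can only lower the pairing of a dominant weight, so by Steinberg's
  formula every irreducible \<open>\<nu>\<close> in \<open>\<lambda> \<otimes> \<mu>\<close> has
  \<open>\<langle>\<nu>|2\<rho>\<rangle> \<le> \<langle>\<lambda> + \<mu>|2\<rho>\<rangle>\<close>, and \<open>\<lambda> + \<mu>\<close> itself occurs.
  Hence, if \<open>y\<^sub>0 \<in> Y\<close> maximises \<open>h = \<langle>y\<^sub>0|2\<rho>\<rangle>\<close>, the ball of radius \<open>n\<close>
  contains \<open>n y\<^sub>0\<close> and consists of dominant weights of pairing at most \<open>n h\<close>, of which
  there are polynomially many in \<open>n\<close>. The quantum dimension \<open>d(\<lambda>)\<close> lies between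
  \<open>q powr -\<langle>\<lambda>|2\<rho>\<rangle>\<close> and a constant multiple of it. So \<open>|B\<^sub>Y(n)|\<close> lies between
  \<open>M\<^sup>n\<close> and a polynomial times \<open>M\<^sup>n\<close>, where \<open>M = q powr -2h = max\<^sub>Y q powr -4\<langle>y|\<rho>\<rangle>\<close>,
  and its \<open>n\<close>-th root tends to \<open>M\<close>.
\<close>

section \<open>Quantum integers\<close>

lemma powr_less_cancel_iff_base_less_1:
  fixes q :: real
  assumes "0 < q" "q < 1"
  shows "q powr a < q powr b \<longleftrightarrow> b < a"
  using assms by (simp add: powr_def mult_less_cancel_right)

lemma qint_denominator_pos: "0 < q \<Longrightarrow> q < 1 \<Longrightarrow> 0 < q powr (-1) - q" for q :: real
  using mult_strict_mono[of q 1 q 1] by (simp add: powr_neg_one pos_less_divide_eq)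

lemma qint_pos: "0 < q \<Longrightarrow> q < 1 \<Longrightarrow> 0 < x \<Longrightarrow> 0 < qint q x"
  unfolding qint_def
  by (intro divide_pos_pos qint_denominator_pos) (simp_all add: powr_less_cancel_iff_base_less_1)

lemma qint_ratio_ge:
  assumes q: "0 < q" "q < 1" and a: "0 < a" and x: "0 \<le> x"
  shows "q powr (-x) \<le> qint q (x + a) / qint q a"
proof -
  have "q powr (x + a) \<le> q powr (a - x)"
    using x q by (intro powr_mono') auto
  then have "q powr (-x) * qint q a \<le> qint q (x + a)"
    using qint_denominator_pos[OF q]
    by (simp add: qint_def divide_right_mono right_diff_distrib powr_add[symmetric])
  then show ?thesis
    using qint_pos[OF q a] by (simp add: pos_le_divide_eq)
qed

lemma qint_ratio_le:
  assumes q: "0 < q" "q < 1" and a: "0 < a"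
  shows "qint q (x + a) / qint q a
           \<le> q powr (-x) * (q powr (-a) / ((q powr (-1) - q) * qint q a))"
proof -
  have "qint q (x + a) \<le> q powr (-x) * q powr (-a) / (q powr (-1) - q)"
    using qint_denominator_pos[OF q]
    by (simp add: qint_def divide_right_mono powr_add[symmetric])
  then have "qint q (x + a) / qint q a
      \<le> q powr (-x) * q powr (-a) / (q powr (-1) - q) / qint q a"
    using qint_pos[OF q a] by (intro divide_right_mono) auto
  then show ?thesis by (simp add: divide_divide_eq_left)
qed

section \<open>Roots of exponentially bounded sequences\<close>

lemma root_tendsto_of_exponential_bounds:
  fixes f :: "nat \<Rightarrow> real"
  assumes "0 < M" "0 < A" "0 < B"
    and bounds: "\<forall>\<^sub>F n in sequentially. A * M ^ n \<le> f n \<and> f n \<le> B * real n ^ p * M ^ n"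
  shows "(\<lambda>n. f n powr (1 / real n)) \<longlonglongrightarrow> M"
proof -
  have roots: "root n (A * M ^ n) = root n A * M"
    "root n (B * real n ^ p * M ^ n) = root n B * root n (real n) ^ p * M" if "0 < n" for n
    using that \<open>0 < M\<close> by (simp_all add: real_root_mult real_root_power real_root_power_cancel)
  have "\<forall>\<^sub>F n in sequentially. 0 < n" by (simp add: eventually_gt_at_top)
  with bounds have "\<forall>\<^sub>F n in sequentially. 0 < n \<and> A * M ^ n \<le> f n \<and> f n \<le> B * real n ^ p * M ^ n"
    by eventually_elim simp
  then have ev: "\<forall>\<^sub>F n in sequentially.
      root n A * M \<le> root n (f n) \<and> root n (f n) \<le> root n B * root n (real n) ^ p * M
      \<and> f n powr (1 / real n) = root n (f n)"
  proof eventually_elim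
    case (elim n)
    then have "0 \<le> f n"
      using \<open>0 < M\<close> \<open>0 < A\<close> by (meson order_trans less_imp_le mult_pos_pos zero_less_power)
    then have "f n powr (1 / real n) = root n (f n)"
      using elim by (simp add: root_powr_inverse)
    moreover have "root n A * M \<le> root n (f n)"
      using roots(1)[of n] real_root_le_mono[of n "A * M ^ n" "f n"] elim by simp
    moreover have "root n (f n) \<le> root n B * root n (real n) ^ p * M"
      using roots(2)[of n] real_root_le_mono[of n "f n" "B * real n ^ p * M ^ n"] elim by simp
    ultimately show ?case by blast
  qed
  have "(\<lambda>n. root n A * M) \<longlonglongrightarrow> 1 * M"
    by (intro tendsto_mult LIMSEQ_root_const \<open>0 < A\<close> tendsto_const)
  moreover have "(\<lambda>n. root n B * root n (real n) ^ p * M) \<longlonglongrightarrow> 1 * 1 ^ p * M"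
    by (intro tendsto_mult tendsto_power LIMSEQ_root_const LIMSEQ_root \<open>0 < B\<close> tendsto_const)
  ultimately have "(\<lambda>n. root n (f n)) \<longlonglongrightarrow> M"
    using tendsto_sandwich[of "\<lambda>n. root n A * M" "\<lambda>n. root n (f n)" sequentially
        "\<lambda>n. root n B * root n (real n) ^ p * M" M]
      eventually_mono[OF ev, of "\<lambda>n. root n A * M \<le> root n (f n)"]
      eventually_mono[OF ev, of "\<lambda>n. root n (f n) \<le> root n B * root n (real n) ^ p * M"]
    by simp
  then show ?thesis
    using eventually_mono[OF ev, of "\<lambda>n. root n (f n) = f n powr (1 / real n)"]
    by (rule Lim_transform_eventually) simp
qed

section \<open>Reflections and the Weyl group\<close>

lemma refl_vec_linear: "linear (refl_vec \<alpha>)"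
  by (rule linearI) (simp_all add: refl_vec_def inner_add_left add_divide_distrib
      scaleR_add_left scaleR_diff_right)

lemma inner_refl_vec: "\<alpha> \<noteq> 0 \<Longrightarrow> refl_vec \<alpha> x \<bullet> refl_vec \<alpha> y = x \<bullet> y"
  by (simp add: refl_vec_def inner_diff_left inner_diff_right inner_commute)

lemma refl_vec_self: "\<alpha> \<noteq> 0 \<Longrightarrow> refl_vec \<alpha> \<alpha> = - \<alpha>"
  by (simp add: refl_vec_def scaleR_2 algebra_simps)

locale positive_system =
  fixes \<Phi> :: "'a::euclidean_space set" and t :: 'a
  assumes root_system: "root_system \<Phi>" and regular: "regular \<Phi> t"
begin

abbreviation P :: "'a set" where "P \<equiv> pos_roots \<Phi> t"

lemma finite_roots: "finite \<Phi>"
  and zero_notin_roots: "0 \<notin> \<Phi>"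
  and span_roots: "span \<Phi> = UNIV"
  and refl_vec_root: "\<alpha> \<in> \<Phi> \<Longrightarrow> \<beta> \<in> \<Phi> \<Longrightarrow> refl_vec \<alpha> \<beta> \<in> \<Phi>"
  and cartan_integer: "\<alpha> \<in> \<Phi> \<Longrightarrow> \<beta> \<in> \<Phi> \<Longrightarrow> 2 * (\<beta> \<bullet> \<alpha>) / (\<alpha> \<bullet> \<alpha>) \<in> \<int>"
  using root_system unfolding root_system_def by auto

lemma uminus_root:
  assumes "\<beta> \<in> \<Phi>" shows "- \<beta> \<in> \<Phi>"
proof -
  have "\<beta> \<noteq> 0" using assms zero_notin_roots by blast
  then show ?thesis using refl_vec_root[OF assms assms] by (simp add: refl_vec_self)
qed

lemma pos_roots_subset: "P \<subseteq> \<Phi>"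
  by (auto simp: pos_roots_def)

lemma finite_pos_roots: "finite P"
  using finite_roots pos_roots_subset by (rule finite_subset[rotated])

lemma pos_root_inner_t_pos: "\<beta> \<in> P \<Longrightarrow> 0 < \<beta> \<bullet> t"
  by (simp add: pos_roots_def)

lemma uminus_pos_root:
  assumes "\<beta> \<in> \<Phi>" "\<beta> \<notin> P" shows "- \<beta> \<in> P"
proof -
  have "\<beta> \<bullet> t < 0"
    using assms regular unfolding regular_def pos_roots_def by force
  then show ?thesis using uminus_root[OF assms(1)] by (simp add: pos_roots_def)
qed

lemma weyl_group_isometry:
  "w \<in> weyl_group \<Phi> \<Longrightarrow> linear w \<and> (\<forall>x y. w x \<bullet> w y = x \<bullet> y) \<and> w ` \<Phi> \<subseteq> \<Phi>"
proof (induction rule: weyl_group.induct)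
  case weyl_id
  show ?case using linear_id by (simp add: id_def)
next
  case (weyl_step w \<alpha>)
  then have "\<alpha> \<noteq> 0" using zero_notin_roots by auto
  have "linear (refl_vec \<alpha> \<circ> w)"
    using weyl_step.IH by (intro linear_compose refl_vec_linear) blast
  moreover have "\<forall>x y. (refl_vec \<alpha> \<circ> w) x \<bullet> (refl_vec \<alpha> \<circ> w) y = x \<bullet> y"
    using weyl_step.IH \<open>\<alpha> \<noteq> 0\<close> by (simp add: inner_refl_vec)
  moreover have "(refl_vec \<alpha> \<circ> w) ` \<Phi> \<subseteq> \<Phi>"
    using weyl_step.IH weyl_step.hyps(2) refl_vec_root by (auto simp: image_subset_iff)
  ultimately show ?case by (intro conjI)
qed

lemma weyl_group_linear: "w \<in> weyl_group \<Phi> \<Longrightarrow> linear w"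
  and weyl_group_inner: "w \<in> weyl_group \<Phi> \<Longrightarrow> w x \<bullet> w y = x \<bullet> y"
  and weyl_group_root: "w \<in> weyl_group \<Phi> \<Longrightarrow> \<beta> \<in> \<Phi> \<Longrightarrow> w \<beta> \<in> \<Phi>"
  using weyl_group_isometry by blast+

lemma weyl_group_inj:
  assumes "w \<in> weyl_group \<Phi>" shows "inj w"
proof (rule injI)
  fix x y assume "w x = w y"
  then have "w (x - y) \<bullet> w (x - y) = 0"
    using weyl_group_linear[OF assms] by (simp add: linear_diff)
  then show "x = y" by (simp add: weyl_group_inner[OF assms])
qed

lemma finite_weyl_group: "finite (weyl_group \<Phi>)"
proof -
  have "inj_on (\<lambda>w. restrict w \<Phi>) (weyl_group \<Phi>)"
  proof (rule inj_onI)
    fix v w assume vw: "v \<in> weyl_group \<Phi>" "w \<in> weyl_group \<Phi>"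
      and eq: "restrict v \<Phi> = restrict w \<Phi>"
    have "\<And>x. x \<in> \<Phi> \<Longrightarrow> v x = w x"
      using eq by (metis restrict_apply')
    then have "\<And>x. x \<in> span \<Phi> \<Longrightarrow> v x = w x"
      using linear_eq_on_span[OF weyl_group_linear[OF vw(1)] weyl_group_linear[OF vw(2)]] by blast
    then show "v = w" using span_roots by auto
  qed
  moreover have "(\<lambda>w. restrict w \<Phi>) ` weyl_group \<Phi> \<subseteq> \<Phi> \<rightarrow>\<^sub>E \<Phi>"
    using weyl_group_root by (auto simp: PiE_iff)
  ultimately show ?thesis
    by (rule inj_on_finite) (simp add: finite_PiE finite_roots)
qed

lemma refl_vec_weyl_group: "\<alpha> \<in> \<Phi> \<Longrightarrow> refl_vec \<alpha> \<in> weyl_group \<Phi>"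
  using weyl_group.weyl_step[OF weyl_group.weyl_id] by fastforce

lemma weyl_sign_eq_1: "(\<And>\<beta>. \<beta> \<in> P \<Longrightarrow> w \<beta> \<in> P) \<Longrightarrow> weyl_sign \<Phi> t w = 1"
  unfolding weyl_sign_def by (metis (mono_tags, lifting) card.empty empty_Collect_eq power_0)

definition pos_sign :: "('a \<Rightarrow> 'a) \<Rightarrow> 'a \<Rightarrow> real" where
  "pos_sign w \<beta> = (if w \<beta> \<in> P then 1 else -1)"

definition two_rho :: 'a where
  "two_rho = (\<Sum>\<beta>\<in>P. \<beta>)"

lemma inner_two_rho: "x \<bullet> two_rho = (\<Sum>\<beta>\<in>P. x \<bullet> \<beta>)"
  by (simp add: two_rho_def inner_sum_right)

lemma weyl_vec_eq: "weyl_vec \<Phi> t = (1 / 2) *\<^sub>R two_rho"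
  by (simp add: weyl_vec_def two_rho_def)

lemma signed_weyl_image_pos_roots:
  assumes w: "w \<in> weyl_group \<Phi>"
  shows "bij_betw (\<lambda>\<beta>. pos_sign w \<beta> *\<^sub>R w \<beta>) P P"
proof -
  let ?g = "\<lambda>\<beta>. pos_sign w \<beta> *\<^sub>R w \<beta>"
  have "?g \<beta> \<in> P" if "\<beta> \<in> P" for \<beta>
    using that pos_roots_subset weyl_group_root[OF w] uminus_pos_root
    by (auto simp: pos_sign_def)
  moreover have "inj_on ?g P"
  proof (rule inj_onI)
    fix \<beta> \<gamma> assume "\<beta> \<in> P" "\<gamma> \<in> P" and "?g \<beta> = ?g \<gamma>"
    then have "w (pos_sign w \<beta> *\<^sub>R \<beta>) = w (pos_sign w \<gamma> *\<^sub>R \<gamma>)"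
      using weyl_group_linear[OF w] by (simp add: linear_scale)
    then have eq: "pos_sign w \<beta> *\<^sub>R \<beta> = pos_sign w \<gamma> *\<^sub>R \<gamma>"
      using weyl_group_inj[OF w] by (simp add: inj_eq)
    have "\<beta> \<noteq> - \<gamma>"
      using pos_root_inner_t_pos[OF \<open>\<beta> \<in> P\<close>] pos_root_inner_t_pos[OF \<open>\<gamma> \<in> P\<close>] by auto
    with eq show "\<beta> = \<gamma>"
      by (auto simp: pos_sign_def split: if_splits)
  qed
  ultimately show ?thesis
    using finite_pos_roots by (simp add: bij_betw_def endo_inj_surj image_subsetI)
qed

lemma weyl_inner_two_rho:
  assumes w: "w \<in> weyl_group \<Phi>"
  shows "w x \<bullet> two_rho = (\<Sum>\<beta>\<in>P. pos_sign w \<beta> * (x \<bullet> \<beta>))"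
proof -
  have "two_rho = (\<Sum>\<beta>\<in>P. pos_sign w \<beta> *\<^sub>R w \<beta>)"
    unfolding two_rho_def
    using sum.reindex_bij_betw[OF signed_weyl_image_pos_roots[OF w], of id] by simp
  then show ?thesis
    by (simp add: inner_sum_right weyl_group_inner[OF w])
qed

lemma weyl_inner_two_rho_le:
  assumes "w \<in> weyl_group \<Phi>" and "\<And>\<beta>. \<beta> \<in> P \<Longrightarrow> 0 \<le> x \<bullet> \<beta>"
  shows "w x \<bullet> two_rho \<le> x \<bullet> two_rho"
  unfolding weyl_inner_two_rho[OF assms(1)] inner_two_rho[of x]
  by (rule sum_mono) (use assms(2) in \<open>auto simp: pos_sign_def\<close>)

lemma weyl_pos_root_if_inner_two_rho_ge:
  assumes w: "w \<in> weyl_group \<Phi>" and x: "\<And>\<beta>. \<beta> \<in> P \<Longrightarrow> 0 < x \<bullet> \<beta>"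
    and ge: "x \<bullet> two_rho \<le> w x \<bullet> two_rho" and "\<beta> \<in> P"
  shows "w \<beta> \<in> P"
proof (rule ccontr)
  assume "w \<beta> \<notin> P"
  have "(\<Sum>\<beta>\<in>P. pos_sign w \<beta> * (x \<bullet> \<beta>)) < (\<Sum>\<beta>\<in>P. x \<bullet> \<beta>)"
  proof (rule sum_strict_mono_ex1[OF finite_pos_roots])
    show "\<forall>\<gamma>\<in>P. pos_sign w \<gamma> * (x \<bullet> \<gamma>) \<le> x \<bullet> \<gamma>"
      using x by (auto simp: pos_sign_def less_imp_le)
    show "\<exists>\<gamma>\<in>P. pos_sign w \<gamma> * (x \<bullet> \<gamma>) < x \<bullet> \<gamma>"
      using \<open>\<beta> \<in> P\<close> \<open>w \<beta> \<notin> P\<close> x[of \<beta>] by (auto simp: pos_sign_def)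
  qed
  with ge show False
    unfolding weyl_inner_two_rho[OF w] inner_two_rho[of x] by simp
qed

lemma pos_root_inner_two_rho:
  assumes "\<alpha> \<in> P" shows "0 < \<alpha> \<bullet> two_rho"
proof -
  \<comment> \<open>\<open>t - s\<^sub>\<alpha> t\<close> is a positive multiple of \<open>\<alpha>\<close>, and its pairing with \<open>2\<rho>\<close> is a sum of
    nonnegative terms, the one for \<open>\<alpha>\<close> being positive.\<close>
  let ?s = "refl_vec \<alpha>"
  have \<alpha>: "\<alpha> \<in> \<Phi>" "0 < \<alpha> \<bullet> \<alpha>" "0 < \<alpha> \<bullet> t"
    using assms pos_roots_subset zero_notin_roots pos_root_inner_t_pos by auto
  then have s: "?s \<in> weyl_group \<Phi>" "pos_sign ?s \<alpha> = -1"
    using refl_vec_weyl_group refl_vec_self[of \<alpha>] by (auto simp: pos_sign_def pos_roots_def)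
  have "(1 - pos_sign ?s \<alpha>) * (t \<bullet> \<alpha>) \<le> (\<Sum>\<beta>\<in>P. (1 - pos_sign ?s \<beta>) * (t \<bullet> \<beta>))"
    by (rule member_le_sum[OF assms _ finite_pos_roots])
      (auto simp: pos_sign_def inner_commute intro!: less_imp_le[OF pos_root_inner_t_pos])
  also have "\<dots> = (t - ?s t) \<bullet> two_rho"
    by (simp add: inner_diff_left weyl_inner_two_rho[OF s(1)] inner_two_rho[of t]
        sum_subtractf left_diff_distrib)
  also have "\<dots> = (2 * (t \<bullet> \<alpha>) / (\<alpha> \<bullet> \<alpha>)) * (\<alpha> \<bullet> two_rho)"
    by (simp add: refl_vec_def)
  finally have "0 < (2 * (t \<bullet> \<alpha>) / (\<alpha> \<bullet> \<alpha>)) * (\<alpha> \<bullet> two_rho)"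
    using s(2) \<alpha>(3) by (simp add: inner_commute)
  moreover have "0 < 2 * (t \<bullet> \<alpha>) / (\<alpha> \<bullet> \<alpha>)"
    using \<alpha> by (simp add: inner_commute)
  ultimately show ?thesis by (rule zero_less_mult_pos)
qed

section \<open>Tensor products via Steinberg's formula\<close>

lemma kpf_nonzero_inner_two_rho_nonneg:
  assumes "kpf \<Phi> t v \<noteq> 0" shows "0 \<le> v \<bullet> two_rho"
proof -
  obtain c :: "'a \<Rightarrow> nat" where c: "(\<Sum>\<alpha>\<in>P. real (c \<alpha>) *\<^sub>R \<alpha>) = v"
    using assms unfolding kpf_def by (metis (mono_tags, lifting) card.empty empty_Collect_eq)
  have "0 \<le> real (c \<alpha>) * (\<alpha> \<bullet> two_rho)" if "\<alpha> \<in> P" for \<alpha>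
    using pos_root_inner_two_rho[OF that] by simp
  then show ?thesis
    unfolding c[symmetric] by (simp add: inner_sum_left sum_nonneg)
qed

lemma coeff_eq_0_if_pos_root_combination_eq_0:
  assumes "(\<Sum>\<beta>\<in>P. real (c \<beta>) *\<^sub>R \<beta>) = 0" and "\<alpha> \<in> P"
  shows "c \<alpha> = 0"
proof -
  have "(\<Sum>\<beta>\<in>P. real (c \<beta>) * (\<beta> \<bullet> two_rho)) = (\<Sum>\<beta>\<in>P. real (c \<beta>) *\<^sub>R \<beta>) \<bullet> two_rho"
    by (simp add: inner_sum_left)
  also have "\<dots> = 0" using assms(1) by simp
  finally have sum_0: "(\<Sum>\<beta>\<in>P. real (c \<beta>) * (\<beta> \<bullet> two_rho)) = 0" .
  have nonneg: "0 \<le> real (c \<beta>) * (\<beta> \<bullet> two_rho)" if "\<beta> \<in> P" for \<beta>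
    using pos_root_inner_two_rho[OF that] by simp
  have "real (c \<alpha>) * (\<alpha> \<bullet> two_rho) = 0"
    using sum_nonneg_0[OF finite_pos_roots nonneg sum_0 assms(2)] .
  then show ?thesis using pos_root_inner_two_rho[OF assms(2)] by simp
qed

lemma kpf_zero: "kpf \<Phi> t 0 = 1"
proof -
  have "{c :: 'a \<Rightarrow> nat. (\<forall>\<alpha>. \<alpha> \<notin> P \<longrightarrow> c \<alpha> = 0) \<and> (\<Sum>\<alpha>\<in>P. real (c \<alpha>) *\<^sub>R \<alpha>) = 0}
      = {\<lambda>_. 0}"
  proof (intro equalityI subsetI)
    fix c :: "'a \<Rightarrow> nat"
    assume "c \<in> {c. (\<forall>\<alpha>. \<alpha> \<notin> P \<longrightarrow> c \<alpha> = 0) \<and> (\<Sum>\<alpha>\<in>P. real (c \<alpha>) *\<^sub>R \<alpha>) = 0}"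
    then have c: "\<forall>\<alpha>. \<alpha> \<notin> P \<longrightarrow> c \<alpha> = 0" "(\<Sum>\<alpha>\<in>P. real (c \<alpha>) *\<^sub>R \<alpha>) = 0"
      by simp_all
    have "c = (\<lambda>_. 0)"
    proof (rule ext)
      fix \<alpha>
      show "c \<alpha> = 0"
        using c(1) coeff_eq_0_if_pos_root_combination_eq_0[OF c(2), of \<alpha>] by blast
    qed
    then show "c \<in> {\<lambda>_. 0}" by simp
  qed simp
  then show ?thesis unfolding kpf_def by simp
qed

lemma dominant_inner_nonneg: "l \<in> dominant \<Phi> t \<Longrightarrow> \<beta> \<in> P \<Longrightarrow> 0 \<le> l \<bullet> \<beta>"
  by (simp add: dominant_def)

lemma dominant_inner_two_rho_nonneg: "l \<in> dominant \<Phi> t \<Longrightarrow> 0 \<le> l \<bullet> two_rho"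
  by (simp add: inner_two_rho sum_nonneg dominant_inner_nonneg)

lemma dominant_add_weyl_vec_inner_pos:
  "l \<in> dominant \<Phi> t \<Longrightarrow> \<beta> \<in> P \<Longrightarrow> 0 < (l + weyl_vec \<Phi> t) \<bullet> \<beta>"
proof -
  assume "l \<in> dominant \<Phi> t" "\<beta> \<in> P"
  moreover have "(l + weyl_vec \<Phi> t) \<bullet> \<beta> = l \<bullet> \<beta> + (\<beta> \<bullet> two_rho) / 2"
    by (simp add: weyl_vec_eq inner_add_left inner_add_right inner_commute)
  ultimately show ?thesis
    using dominant_inner_nonneg[of l \<beta>] pos_root_inner_two_rho[of \<beta>] by simp
qed

lemma zero_dominant: "0 \<in> dominant \<Phi> t"
  by (simp add: dominant_def weights_def)

lemma dominant_add: "l \<in> dominant \<Phi> t \<Longrightarrow> m \<in> dominant \<Phi> t \<Longrightarrow> l + m \<in> dominant \<Phi> t"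
  by (auto simp: dominant_def weights_def inner_add_left add_divide_distrib distrib_left
      intro: Ints_add)

lemma two_rho_dominant: "two_rho \<in> dominant \<Phi> t"
proof -
  have "2 * (two_rho \<bullet> \<alpha>) / (\<alpha> \<bullet> \<alpha>) = (\<Sum>\<beta>\<in>P. 2 * (\<beta> \<bullet> \<alpha>) / (\<alpha> \<bullet> \<alpha>))" for \<alpha>
    by (simp add: two_rho_def inner_sum_left sum_distrib_left sum_divide_distrib)
  then have "2 * (two_rho \<bullet> \<alpha>) / (\<alpha> \<bullet> \<alpha>) \<in> \<int>" if "\<alpha> \<in> \<Phi>" for \<alpha>
    by (simp only:) (use that pos_roots_subset cartan_integer in \<open>blast intro: Ints_sum\<close>)
  moreover have "0 \<le> two_rho \<bullet> \<alpha>" if "\<alpha> \<in> P" for \<alpha>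
    using pos_root_inner_two_rho[OF that] by (simp add: inner_commute)
  ultimately show ?thesis by (simp add: dominant_def weights_def)
qed

lemma two_rho_nonzero: "two_rho \<noteq> 0"
proof -
  have "\<Phi> \<noteq> {}"
  proof
    assume "\<Phi> = {}"
    then have "(UNIV :: 'a set) = {0}" using span_roots by simp
    then show False using nonzero_Basis SOME_Basis by blast
  qed
  then obtain \<beta> where "\<beta> \<in> \<Phi>" by blast
  then obtain \<gamma> where "\<gamma> \<in> P"
    using uminus_pos_root by blast
  then show ?thesis using pos_root_inner_two_rho by force
qed

lemma steinberg_term_nonzero:
  assumes l: "l \<in> dominant \<Phi> t" and m: "m \<in> dominant \<Phi> t"
    and w: "w \<in> weyl_group \<Phi>" and w': "w' \<in> weyl_group \<Phi>"
    and kpf: "kpf \<Phi> t (w (l + weyl_vec \<Phi> t) + w' (m + weyl_vec \<Phi> t)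
                        - (v + 2 *\<^sub>R weyl_vec \<Phi> t)) \<noteq> 0"
  shows "v \<bullet> two_rho \<le> (l + m) \<bullet> two_rho"
    and "v = l + m \<Longrightarrow> weyl_sign \<Phi> t w = 1 \<and> weyl_sign \<Phi> t w' = 1"
proof -
  \<comment> \<open>A nonzero partition function value needs a nonnegative pairing with \<open>2\<rho>\<close>, while
    \<open>w\<close> and \<open>w'\<close> can only lower the pairing of the strictly dominant \<open>l + \<rho>\<close> and \<open>m + \<rho>\<close>.\<close>
  let ?x = "l + weyl_vec \<Phi> t" and ?y = "m + weyl_vec \<Phi> t"
  have x: "\<And>\<beta>. \<beta> \<in> P \<Longrightarrow> 0 < ?x \<bullet> \<beta>" and y: "\<And>\<beta>. \<beta> \<in> P \<Longrightarrow> 0 < ?y \<bullet> \<beta>"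
    using dominant_add_weyl_vec_inner_pos l m by blast+
  have wx: "w ?x \<bullet> two_rho \<le> ?x \<bullet> two_rho" and wy: "w' ?y \<bullet> two_rho \<le> ?y \<bullet> two_rho"
    using weyl_inner_two_rho_le[OF w, of ?x] weyl_inner_two_rho_le[OF w', of ?y] x y
    by (simp_all add: order.strict_implies_order)
  have "0 \<le> (w ?x + w' ?y - (v + 2 *\<^sub>R weyl_vec \<Phi> t)) \<bullet> two_rho"
    by (rule kpf_nonzero_inner_two_rho_nonneg[OF kpf])
  then have sum: "v \<bullet> two_rho - (l + m) \<bullet> two_rho
      \<le> (w ?x \<bullet> two_rho - ?x \<bullet> two_rho) + (w' ?y \<bullet> two_rho - ?y \<bullet> two_rho)"
    by (simp add: weyl_vec_eq inner_add_left inner_diff_left)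
  with wx wy show "v \<bullet> two_rho \<le> (l + m) \<bullet> two_rho" by linarith
  assume "v = l + m"
  with sum have "0 \<le> (w ?x \<bullet> two_rho - ?x \<bullet> two_rho) + (w' ?y \<bullet> two_rho - ?y \<bullet> two_rho)"
    by simp
  with wx wy have "?x \<bullet> two_rho \<le> w ?x \<bullet> two_rho" and "?y \<bullet> two_rho \<le> w' ?y \<bullet> two_rho"
    by linarith+
  then show "weyl_sign \<Phi> t w = 1 \<and> weyl_sign \<Phi> t w' = 1"
    using weyl_pos_root_if_inner_two_rho_ge[OF w x] weyl_pos_root_if_inner_two_rho_ge[OF w' y]
    by (simp add: weyl_sign_eq_1)
qed

lemma tensor_mult_nonzero_imp_kpf_nonzero:
  assumes "tensor_mult \<Phi> t l m v \<noteq> 0"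
  obtains w w' where "w \<in> weyl_group \<Phi>" "w' \<in> weyl_group \<Phi>"
    "kpf \<Phi> t (w (l + weyl_vec \<Phi> t) + w' (m + weyl_vec \<Phi> t) - (v + 2 *\<^sub>R weyl_vec \<Phi> t)) \<noteq> 0"
proof -
  obtain w where "w \<in> weyl_group \<Phi>" and
    "(\<Sum>w'\<in>weyl_group \<Phi>. weyl_sign \<Phi> t w * weyl_sign \<Phi> t w' *
        int (kpf \<Phi> t (w (l + weyl_vec \<Phi> t) + w' (m + weyl_vec \<Phi> t)
                       - (v + 2 *\<^sub>R weyl_vec \<Phi> t)))) \<noteq> 0"
    using assms unfolding tensor_mult_def by (rule sum.not_neutral_contains_not_neutral)
  moreover from this(2) obtain w' where "w' \<in> weyl_group \<Phi>" and
    "weyl_sign \<Phi> t w * weyl_sign \<Phi> t w' *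
        int (kpf \<Phi> t (w (l + weyl_vec \<Phi> t) + w' (m + weyl_vec \<Phi> t)
                       - (v + 2 *\<^sub>R weyl_vec \<Phi> t))) \<noteq> 0"
    by (rule sum.not_neutral_contains_not_neutral)
  ultimately show ?thesis using that by simp
qed

lemma inner_two_rho_le_if_tensor_mult_nonzero:
  assumes "l \<in> dominant \<Phi> t" "m \<in> dominant \<Phi> t" "tensor_mult \<Phi> t l m v \<noteq> 0"
  shows "v \<bullet> two_rho \<le> (l + m) \<bullet> two_rho"
  using assms(3) by (rule tensor_mult_nonzero_imp_kpf_nonzero) (rule steinberg_term_nonzero(1)[OF assms(1,2)])

lemma tensor_mult_add_pos:
  assumes l: "l \<in> dominant \<Phi> t" and m: "m \<in> dominant \<Phi> t"
  shows "0 < tensor_mult \<Phi> t l m (l + m)"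
proof -
  define k where "k w w' = kpf \<Phi> t (w (l + weyl_vec \<Phi> t) + w' (m + weyl_vec \<Phi> t)
                                   - (l + m + 2 *\<^sub>R weyl_vec \<Phi> t))" for w w'
  define f where "f w w' = weyl_sign \<Phi> t w * weyl_sign \<Phi> t w' * int (k w w')" for w w'
  have nonneg: "0 \<le> f w w'" if "w \<in> weyl_group \<Phi>" "w' \<in> weyl_group \<Phi>" for w w'
  proof (cases "k w w' = 0")
    case False
    then show ?thesis
      using steinberg_term_nonzero(2)[OF l m that] by (simp add: f_def k_def)
  qed (simp add: f_def)
  have f_id: "f id id = 1"
    by (simp add: f_def k_def weyl_sign_eq_1 kpf_zero scaleR_2)
  have "0 < (\<Sum>w'\<in>weyl_group \<Phi>. f id w')"
    by (rule sum_pos2[OF finite_weyl_group weyl_group.weyl_id])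
      (simp_all add: f_id nonneg weyl_group.weyl_id)
  then have "0 < (\<Sum>w\<in>weyl_group \<Phi>. \<Sum>w'\<in>weyl_group \<Phi>. f w w')"
    by (rule sum_pos2[OF finite_weyl_group weyl_group.weyl_id]) (simp_all add: sum_nonneg nonneg)
  then show ?thesis by (simp add: tensor_mult_def f_def k_def)
qed

lemma products_subset_dominant: "products \<Phi> t Y n \<subseteq> dominant \<Phi> t"
  by (cases n) (auto simp: zero_dominant)

lemma inner_two_rho_le_if_mem_products:
  assumes Y: "Y \<subseteq> dominant \<Phi> t" and h: "\<forall>y\<in>Y. y \<bullet> two_rho \<le> h"
  shows "l \<in> products \<Phi> t Y n \<Longrightarrow> l \<bullet> two_rho \<le> real n * h"
proof (induction n arbitrary: l)
  case (Suc n)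
  then obtain m y where m: "m \<in> products \<Phi> t Y n" and "y \<in> Y"
    and "tensor_mult \<Phi> t m y l > 0" by auto
  then have "l \<bullet> two_rho \<le> (m + y) \<bullet> two_rho"
    using Y products_subset_dominant
    by (intro inner_two_rho_le_if_tensor_mult_nonzero) auto
  also have "\<dots> \<le> real n * h + h"
    using Suc.IH[OF m] bspec[OF h \<open>y \<in> Y\<close>] by (simp add: inner_add_left)
  finally show ?case by (simp add: algebra_simps)
qed simp

lemma scaleR_mem_products:
  assumes "Y \<subseteq> dominant \<Phi> t" "y \<in> Y"
  shows "real n *\<^sub>R y \<in> products \<Phi> t Y n"
proof (induction n)
  case (Suc n)
  have "real n *\<^sub>R y \<in> dominant \<Phi> t" "y \<in> dominant \<Phi> t"
    using Suc products_subset_dominant assms by blast+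
  then have "real n *\<^sub>R y + y \<in> dominant \<Phi> t" "0 < tensor_mult \<Phi> t (real n *\<^sub>R y) y (real n *\<^sub>R y + y)"
    by (simp_all add: dominant_add tensor_mult_add_pos)
  moreover have "real (Suc n) *\<^sub>R y = real n *\<^sub>R y + y"
    by (simp add: algebra_simps)
  ultimately show ?case
    using Suc.IH assms(2) unfolding products.simps by auto
qed simp

lemma ball_set_subset:
  assumes "Y \<subseteq> dominant \<Phi> t" and "\<forall>y\<in>Y. y \<bullet> two_rho \<le> h" and "0 \<le> h"
  shows "ball_set \<Phi> t Y n \<subseteq> {l \<in> dominant \<Phi> t. l \<bullet> two_rho \<le> real n * h}"
proof
  fix l assume "l \<in> ball_set \<Phi> t Y n"
  then have l: "l \<in> dominant \<Phi> t" "\<exists>k. l \<in> products \<Phi> t Y k" "word_length \<Phi> t Y l \<le> n"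
    unfolding ball_set_def by simp_all
  have "l \<in> products \<Phi> t Y (word_length \<Phi> t Y l)"
    using l(2) unfolding word_length_def by (rule LeastI_ex)
  then have "l \<bullet> two_rho \<le> real (word_length \<Phi> t Y l) * h"
    by (rule inner_two_rho_le_if_mem_products[OF assms(1,2)])
  also have "\<dots> \<le> real n * h"
    using l(3) assms(3) by (intro mult_right_mono) auto
  finally show "l \<in> {l \<in> dominant \<Phi> t. l \<bullet> two_rho \<le> real n * h}"
    using l(1) by simp
qed

lemma scaleR_mem_ball_set:
  assumes "Y \<subseteq> dominant \<Phi> t" "y \<in> Y"
  shows "real n *\<^sub>R y \<in> ball_set \<Phi> t Y n"
proof -
  have "real n *\<^sub>R y \<in> products \<Phi> t Y n"
    by (rule scaleR_mem_products[OF assms])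
  moreover from this have "real n *\<^sub>R y \<in> dominant \<Phi> t"
    using products_subset_dominant by (rule subsetD[rotated])
  moreover from calculation(1) have "word_length \<Phi> t Y (real n *\<^sub>R y) \<le> n"
    unfolding word_length_def by (rule Least_le)
  ultimately show ?thesis
    unfolding ball_set_def by blast
qed

section \<open>Counting dominant weights\<close>

lemma eq_if_inner_pos_roots_eq:
  assumes "\<forall>\<alpha>\<in>P. x \<bullet> \<alpha> = y \<bullet> \<alpha>" shows "x = y"
proof -
  have orth: "orthogonal (x - y) \<beta>" if "\<beta> \<in> \<Phi>" for \<beta>
  proof (cases "\<beta> \<in> P")
    case True
    with assms show ?thesis by (simp add: orthogonal_def inner_diff_left)
  next
    case False
    with that have "- \<beta> \<in> P" by (rule uminus_pos_root)
    then show ?thesis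
      using bspec[OF assms \<open>- \<beta> \<in> P\<close>] by (simp add: orthogonal_def inner_diff_left)
  qed
  have "orthogonal (x - y) (x - y)"
    by (rule orthogonal_to_span[of _ \<Phi>]) (simp_all add: span_roots orth)
  then show ?thesis by (simp add: orthogonal_def)
qed

lemma pos_root_inner_self_pos: "\<alpha> \<in> P \<Longrightarrow> 0 < \<alpha> \<bullet> \<alpha>"
  using pos_roots_subset zero_notin_roots by auto

lemma dominant_coordinate:
  assumes "l \<in> dominant \<Phi> t" "\<alpha> \<in> P"
  shows "real (nat \<lfloor>2 * (l \<bullet> \<alpha>) / (\<alpha> \<bullet> \<alpha>)\<rfloor>) = 2 * (l \<bullet> \<alpha>) / (\<alpha> \<bullet> \<alpha>)"
proof -
  have "2 * (l \<bullet> \<alpha>) / (\<alpha> \<bullet> \<alpha>) \<in> \<int>"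
    using assms pos_roots_subset by (auto simp: dominant_def weights_def)
  then obtain k where "2 * (l \<bullet> \<alpha>) / (\<alpha> \<bullet> \<alpha>) = of_int k" by (elim Ints_cases)
  moreover have "0 \<le> 2 * (l \<bullet> \<alpha>) / (\<alpha> \<bullet> \<alpha>)"
    using assms dominant_inner_nonneg pos_root_inner_self_pos by simp
  ultimately show ?thesis by simp
qed

lemma dominant_eq_if_coordinates_eq:
  assumes l: "l \<in> dominant \<Phi> t" and l': "l' \<in> dominant \<Phi> t"
    and eq: "\<And>\<alpha>. \<alpha> \<in> P \<Longrightarrow> nat \<lfloor>2 * (l \<bullet> \<alpha>) / (\<alpha> \<bullet> \<alpha>)\<rfloor> = nat \<lfloor>2 * (l' \<bullet> \<alpha>) / (\<alpha> \<bullet> \<alpha>)\<rfloor>"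
  shows "l = l'"
proof (rule eq_if_inner_pos_roots_eq, intro ballI)
  fix \<alpha> assume \<alpha>: "\<alpha> \<in> P"
  have "2 * (l \<bullet> \<alpha>) / (\<alpha> \<bullet> \<alpha>) = 2 * (l' \<bullet> \<alpha>) / (\<alpha> \<bullet> \<alpha>)"
    using eq[OF \<alpha>] dominant_coordinate[OF l \<alpha>] dominant_coordinate[OF l' \<alpha>] by metis
  then show "l \<bullet> \<alpha> = l' \<bullet> \<alpha>"
    using pos_root_inner_self_pos[OF \<alpha>] by simp
qed

lemma dominant_inner_le_inner_two_rho:
  assumes "l \<in> dominant \<Phi> t" "\<alpha> \<in> P"
  shows "l \<bullet> \<alpha> \<le> l \<bullet> two_rho"
  unfolding inner_two_rho
  using assms dominant_inner_nonneg by (intro member_le_sum[OF assms(2) _ finite_pos_roots]) auto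

lemma card_dominant_inner_two_rho_le:
  assumes "0 \<le> C"
  shows "finite {l \<in> dominant \<Phi> t. l \<bullet> two_rho \<le> C}"
    and "real (card {l \<in> dominant \<Phi> t. l \<bullet> two_rho \<le> C}) \<le> (\<Prod>\<alpha>\<in>P. 2 * C / (\<alpha> \<bullet> \<alpha>) + 1)"
proof -
  let ?D = "{l \<in> dominant \<Phi> t. l \<bullet> two_rho \<le> C}"
  define coord where "coord l = (\<lambda>\<alpha>\<in>P. nat \<lfloor>2 * (l \<bullet> \<alpha>) / (\<alpha> \<bullet> \<alpha>)\<rfloor>)" for l
  define N :: "'a \<Rightarrow> nat" where "N \<alpha> = nat \<lfloor>2 * C / (\<alpha> \<bullet> \<alpha>)\<rfloor>" for \<alpha>
  have "coord l \<in> (\<Pi>\<^sub>E \<alpha>\<in>P. {0..N \<alpha>})" if l: "l \<in> ?D" for l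
  proof -
    have "2 * (l \<bullet> \<alpha>) / (\<alpha> \<bullet> \<alpha>) \<le> 2 * C / (\<alpha> \<bullet> \<alpha>)" if "\<alpha> \<in> P" for \<alpha>
      using dominant_inner_le_inner_two_rho[of l \<alpha>] l that pos_root_inner_self_pos[OF that]
      by (simp add: divide_right_mono)
    then show ?thesis by (simp add: coord_def N_def nat_mono floor_mono)
  qed
  then have maps: "coord ` ?D \<subseteq> (\<Pi>\<^sub>E \<alpha>\<in>P. {0..N \<alpha>})" by blast
  have inj: "inj_on coord ?D"
  proof (rule inj_onI)
    fix l l' assume l: "l \<in> ?D" and l': "l' \<in> ?D" and eq: "coord l = coord l'"
    have "nat \<lfloor>2 * (l \<bullet> \<alpha>) / (\<alpha> \<bullet> \<alpha>)\<rfloor> = nat \<lfloor>2 * (l' \<bullet> \<alpha>) / (\<alpha> \<bullet> \<alpha>)\<rfloor>"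
      if "\<alpha> \<in> P" for \<alpha>
      using fun_cong[OF eq, of \<alpha>] that by (simp add: coord_def)
    then show "l = l'"
      using l l' by (intro dominant_eq_if_coordinates_eq) simp_all
  qed
  have fin: "finite (\<Pi>\<^sub>E \<alpha>\<in>P. {0..N \<alpha>})"
    by (simp add: finite_PiE finite_pos_roots)
  show "finite ?D"
    using inj maps fin by (rule inj_on_finite)
  have "card ?D \<le> card (\<Pi>\<^sub>E \<alpha>\<in>P. {0..N \<alpha>})"
    using inj maps fin by (rule card_inj_on_le)
  also have "\<dots> = (\<Prod>\<alpha>\<in>P. N \<alpha> + 1)"
    by (simp add: card_PiE finite_pos_roots)
  finally have "real (card ?D) \<le> (\<Prod>\<alpha>\<in>P. real (N \<alpha>) + 1)"
    unfolding of_nat_le_iff[symmetric, where 'a = real] by (simp add: add.commute)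
  also have "\<dots> \<le> (\<Prod>\<alpha>\<in>P. 2 * C / (\<alpha> \<bullet> \<alpha>) + 1)"
  proof (rule prod_mono)
    fix \<alpha> assume "\<alpha> \<in> P"
    then have "real (N \<alpha>) \<le> 2 * C / (\<alpha> \<bullet> \<alpha>)"
      using assms pos_root_inner_self_pos[of \<alpha>] by (simp add: N_def)
    then show "0 \<le> real (N \<alpha>) + 1 \<and> real (N \<alpha>) + 1 \<le> 2 * C / (\<alpha> \<bullet> \<alpha>) + 1" by simp
  qed
  finally show "real (card ?D) \<le> (\<Prod>\<alpha>\<in>P. 2 * C / (\<alpha> \<bullet> \<alpha>) + 1)" .
qed

lemma card_dominant_inner_two_rho_le_power:
  assumes "0 \<le> h" "1 \<le> n"
  shows "real (card {l \<in> dominant \<Phi> t. l \<bullet> two_rho \<le> real n * h})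
           \<le> (\<Prod>\<alpha>\<in>P. 2 * h / (\<alpha> \<bullet> \<alpha>) + 1) * real n ^ card P"
proof -
  have "real (card {l \<in> dominant \<Phi> t. l \<bullet> two_rho \<le> real n * h})
      \<le> (\<Prod>\<alpha>\<in>P. 2 * (real n * h) / (\<alpha> \<bullet> \<alpha>) + 1)"
    using assms by (intro card_dominant_inner_two_rho_le(2)) simp
  also have "\<dots> \<le> (\<Prod>\<alpha>\<in>P. real n * (2 * h / (\<alpha> \<bullet> \<alpha>) + 1))"
  proof (rule prod_mono)
    fix \<alpha> assume "\<alpha> \<in> P"
    have "0 \<le> 2 * h / (\<alpha> \<bullet> \<alpha>)"
      using assms(1) by simp
    then have "0 \<le> real n * (2 * h / (\<alpha> \<bullet> \<alpha>))"
      by (rule mult_nonneg_nonneg[OF of_nat_0_le_iff])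
    moreover have "2 * (real n * h) / (\<alpha> \<bullet> \<alpha>) = real n * (2 * h / (\<alpha> \<bullet> \<alpha>))" by simp
    ultimately show "0 \<le> 2 * (real n * h) / (\<alpha> \<bullet> \<alpha>) + 1 \<and>
        2 * (real n * h) / (\<alpha> \<bullet> \<alpha>) + 1 \<le> real n * (2 * h / (\<alpha> \<bullet> \<alpha>) + 1)"
      using assms(2) by (simp add: distrib_left mult_ac)
  qed
  also have "\<dots> = (\<Prod>\<alpha>\<in>P. 2 * h / (\<alpha> \<bullet> \<alpha>) + 1) * real n ^ card P"
    by (simp add: prod.distrib mult.commute)
  finally show ?thesis .
qed

section \<open>Quantum dimensions and the growth of balls\<close>

lemma weyl_vec_inner_pos: "\<alpha> \<in> P \<Longrightarrow> 0 < weyl_vec \<Phi> t \<bullet> \<alpha>"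
  using dominant_add_weyl_vec_inner_pos[OF zero_dominant] by simp

lemma powr_inner_two_rho: "0 < q \<Longrightarrow> q powr (- (l \<bullet> two_rho)) = (\<Prod>\<alpha>\<in>P. q powr (- (l \<bullet> \<alpha>)))"
  by (simp add: inner_two_rho powr_sum sum_negf[symmetric])

lemma qdim_ge:
  assumes q: "0 < q" "q < 1" and l: "l \<in> dominant \<Phi> t"
  shows "q powr (- (l \<bullet> two_rho)) \<le> qdim \<Phi> t q l"
  unfolding powr_inner_two_rho[OF q(1)] qdim_def
proof (rule prod_mono)
  fix \<alpha> assume "\<alpha> \<in> P"
  then show "0 \<le> q powr (- (l \<bullet> \<alpha>)) \<and> q powr (- (l \<bullet> \<alpha>))
      \<le> qint q ((l + weyl_vec \<Phi> t) \<bullet> \<alpha>) / qint q (weyl_vec \<Phi> t \<bullet> \<alpha>)"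
    using qint_ratio_ge[OF q weyl_vec_inner_pos dominant_inner_nonneg[OF l]]
    by (simp add: inner_add_left)
qed

lemma qdim_pos:
  assumes "0 < q" "q < 1" "l \<in> dominant \<Phi> t"
  shows "0 < qdim \<Phi> t q l"
  by (rule less_le_trans[OF _ qdim_ge[OF assms]]) (use assms(1) in simp)

lemma qdim_le:
  assumes q: "0 < q" "q < 1"
  obtains C where "0 < C"
    and "\<And>l. l \<in> dominant \<Phi> t \<Longrightarrow> qdim \<Phi> t q l \<le> C * q powr (- (l \<bullet> two_rho))"
proof
  define c where "c \<alpha> = q powr (- (weyl_vec \<Phi> t \<bullet> \<alpha>))
      / ((q powr (-1) - q) * qint q (weyl_vec \<Phi> t \<bullet> \<alpha>))" for \<alpha>
  have "0 < c \<alpha>" if "\<alpha> \<in> P" for \<alpha>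
    unfolding c_def using qint_denominator_pos[OF q] qint_pos[OF q weyl_vec_inner_pos[OF that]] q(1)
    by (intro divide_pos_pos mult_pos_pos) simp_all
  then show "0 < (\<Prod>\<alpha>\<in>P. c \<alpha>)" by (rule prod_pos)
  fix l assume l: "l \<in> dominant \<Phi> t"
  have "qdim \<Phi> t q l \<le> (\<Prod>\<alpha>\<in>P. c \<alpha> * q powr (- (l \<bullet> \<alpha>)))"
    unfolding qdim_def
  proof (rule prod_mono)
    fix \<alpha> assume \<alpha>: "\<alpha> \<in> P"
    have "0 \<le> q powr (- (l \<bullet> \<alpha>))" by simp
    also have "\<dots> \<le> qint q ((l + weyl_vec \<Phi> t) \<bullet> \<alpha>) / qint q (weyl_vec \<Phi> t \<bullet> \<alpha>)"
      using qint_ratio_ge[OF q weyl_vec_inner_pos[OF \<alpha>] dominant_inner_nonneg[OF l \<alpha>]]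
      by (simp add: inner_add_left)
    finally have "0 \<le> qint q ((l + weyl_vec \<Phi> t) \<bullet> \<alpha>) / qint q (weyl_vec \<Phi> t \<bullet> \<alpha>)" .
    moreover have "qint q ((l + weyl_vec \<Phi> t) \<bullet> \<alpha>) / qint q (weyl_vec \<Phi> t \<bullet> \<alpha>)
        \<le> c \<alpha> * q powr (- (l \<bullet> \<alpha>))"
      using qint_ratio_le[OF q weyl_vec_inner_pos[OF \<alpha>], of "l \<bullet> \<alpha>"]
      by (simp add: inner_add_left c_def mult.commute)
    ultimately show "0 \<le> qint q ((l + weyl_vec \<Phi> t) \<bullet> \<alpha>) / qint q (weyl_vec \<Phi> t \<bullet> \<alpha>) \<and>
        qint q ((l + weyl_vec \<Phi> t) \<bullet> \<alpha>) / qint q (weyl_vec \<Phi> t \<bullet> \<alpha>)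
        \<le> c \<alpha> * q powr (- (l \<bullet> \<alpha>))" ..
  qed
  also have "\<dots> = (\<Prod>\<alpha>\<in>P. c \<alpha>) * q powr (- (l \<bullet> two_rho))"
    by (simp add: prod.distrib powr_inner_two_rho[OF q(1)])
  finally show "qdim \<Phi> t q l \<le> (\<Prod>\<alpha>\<in>P. c \<alpha>) * q powr (- (l \<bullet> two_rho))" .
qed

lemma finite_ball_set:
  assumes "Y \<subseteq> dominant \<Phi> t" "\<forall>y\<in>Y. y \<bullet> two_rho \<le> h" "0 \<le> h"
  shows "finite (ball_set \<Phi> t Y n)"
  using card_dominant_inner_two_rho_le(1)[of "real n * h"] assms(3) ball_set_subset[OF assms]
  by (auto intro: finite_subset)

lemma ball_size_ge:
  assumes q: "0 < q" "q < 1" and Y: "Y \<subseteq> dominant \<Phi> t" and y0: "y0 \<in> Y"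
    and max: "\<forall>y\<in>Y. y \<bullet> two_rho \<le> y0 \<bullet> two_rho"
  shows "(q powr (-2 * (y0 \<bullet> two_rho))) ^ n \<le> ball_size \<Phi> t q Y n"
proof -
  let ?l = "real n *\<^sub>R y0"
  have mem: "?l \<in> ball_set \<Phi> t Y n"
    by (rule scaleR_mem_ball_set[OF Y y0])
  have "0 \<le> y0 \<bullet> two_rho"
    using Y y0 dominant_inner_two_rho_nonneg by blast
  then have fin: "finite (ball_set \<Phi> t Y n)"
    by (rule finite_ball_set[OF Y max])
  have "(q powr (-2 * (y0 \<bullet> two_rho))) ^ n = (q powr (- (?l \<bullet> two_rho)))\<^sup>2"
    using q(1) by (simp add: powr_power mult_ac)
  also have "\<dots> \<le> (qdim \<Phi> t q ?l)\<^sup>2"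
  proof -
    have "?l \<in> dominant \<Phi> t" using mem by (simp add: ball_set_def)
    then have "q powr (- (?l \<bullet> two_rho)) \<le> qdim \<Phi> t q ?l" by (rule qdim_ge[OF q])
    then show ?thesis by (intro power_mono) simp_all
  qed
  also have "\<dots> \<le> ball_size \<Phi> t q Y n"
    unfolding ball_size_def by (rule member_le_sum[OF mem _ fin]) simp
  finally show ?thesis .
qed

lemma ball_size_le:
  assumes q: "0 < q" "q < 1" and Y: "Y \<subseteq> dominant \<Phi> t"
    and h: "\<forall>y\<in>Y. y \<bullet> two_rho \<le> h" "0 \<le> h"
  obtains B where "0 < B"
    and "\<And>n. 1 \<le> n \<Longrightarrow> ball_size \<Phi> t q Y n \<le> B * real n ^ card P * (q powr (-2 * h)) ^ n"
proof -
  obtain C where C: "0 < C"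
    "\<And>l. l \<in> dominant \<Phi> t \<Longrightarrow> qdim \<Phi> t q l \<le> C * q powr (- (l \<bullet> two_rho))"
    using qdim_le[OF q] by blast
  define K where "K = (\<Prod>\<alpha>\<in>P. 2 * h / (\<alpha> \<bullet> \<alpha>) + 1)"
  have "0 < K"
    unfolding K_def using h(2) by (intro prod_pos add_nonneg_pos divide_nonneg_nonneg) simp_all
  have "ball_size \<Phi> t q Y n \<le> (C\<^sup>2 * K) * real n ^ card P * (q powr (-2 * h)) ^ n"
    if n: "1 \<le> n" for n
  proof -
    let ?D = "{l \<in> dominant \<Phi> t. l \<bullet> two_rho \<le> real n * h}"
    have finD: "finite ?D"
      using card_dominant_inner_two_rho_le(1) h(2) by simp
    have summand_le: "(qdim \<Phi> t q l)\<^sup>2 \<le> C\<^sup>2 * (q powr (-2 * h)) ^ n" if l: "l \<in> ?D" for l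
    proof -
      have "qdim \<Phi> t q l \<le> C * q powr (- (l \<bullet> two_rho))"
        using C(2) l by simp
      also have "\<dots> \<le> C * q powr (- (real n * h))"
        using l q C(1) by (intro mult_left_mono powr_mono') auto
      finally have "(qdim \<Phi> t q l)\<^sup>2 \<le> (C * q powr (- (real n * h)))\<^sup>2"
        using order.strict_implies_order[OF qdim_pos[OF q]] l by (intro power_mono) auto
      also have "\<dots> = C\<^sup>2 * (q powr (-2 * h)) ^ n"
        using q(1) by (simp add: power_mult_distrib powr_power mult_ac)
      finally show ?thesis .
    qed
    have "ball_size \<Phi> t q Y n \<le> (\<Sum>l\<in>?D. (qdim \<Phi> t q l)\<^sup>2)"
      unfolding ball_size_def by (rule sum_mono2[OF finD ball_set_subset[OF Y h]]) simp
    also have "\<dots> \<le> real (card ?D) * (C\<^sup>2 * (q powr (-2 * h)) ^ n)"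
      by (rule sum_bounded_above) (rule summand_le)
    also have "\<dots> \<le> K * real n ^ card P * (C\<^sup>2 * (q powr (-2 * h)) ^ n)"
      using card_dominant_inner_two_rho_le_power[OF h(2) n]
      by (intro mult_right_mono) (simp_all add: K_def)
    finally show ?thesis by (simp add: mult_ac)
  qed
  then show thesis
    using that[of "C\<^sup>2 * K"] C(1) \<open>0 < K\<close> by simp
qed

lemma ball_size_root_tendsto:
  assumes q: "0 < q" "q < 1" and Y: "Y \<subseteq> dominant \<Phi> t" and y0: "y0 \<in> Y"
    and max: "\<forall>y\<in>Y. y \<bullet> two_rho \<le> y0 \<bullet> two_rho"
  shows "(\<lambda>n. ball_size \<Phi> t q Y n powr (1 / real n)) \<longlonglongrightarrow> q powr (-2 * (y0 \<bullet> two_rho))"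
proof -
  have "0 \<le> y0 \<bullet> two_rho"
    using Y y0 dominant_inner_two_rho_nonneg by blast
  then obtain B where B: "0 < B" "\<And>n. 1 \<le> n \<Longrightarrow>
      ball_size \<Phi> t q Y n \<le> B * real n ^ card P * (q powr (-2 * (y0 \<bullet> two_rho))) ^ n"
    using ball_size_le[OF q Y max] by blast
  show ?thesis
  proof (rule root_tendsto_of_exponential_bounds)
    show "\<forall>\<^sub>F n in sequentially. 1 * (q powr (-2 * (y0 \<bullet> two_rho))) ^ n \<le> ball_size \<Phi> t q Y n
        \<and> ball_size \<Phi> t q Y n \<le> B * real n ^ card P * (q powr (-2 * (y0 \<bullet> two_rho))) ^ n"
      unfolding eventually_sequentially using ball_size_ge[OF q Y y0 max] B(2) by auto
  qed (use q B(1) in simp_all)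
qed

lemma ball_size_root_tendsto_Max:
  assumes q: "0 < q" "q < 1" and Y: "finite Y" "Y \<noteq> {}" "Y \<subseteq> dominant \<Phi> t"
  shows "(\<lambda>n. ball_size \<Phi> t q Y n powr (1 / real n)) \<longlonglongrightarrow>
           Max ((\<lambda>l. q powr (-4 * (l \<bullet> weyl_vec \<Phi> t))) ` Y)"
proof -
  have "Max ((\<lambda>y. y \<bullet> two_rho) ` Y) \<in> (\<lambda>y. y \<bullet> two_rho) ` Y"
    using Y(1,2) by simp
  then obtain y0 where y0: "y0 \<in> Y" and "y0 \<bullet> two_rho = Max ((\<lambda>y. y \<bullet> two_rho) ` Y)"
    by auto
  then have max: "\<forall>y\<in>Y. y \<bullet> two_rho \<le> y0 \<bullet> two_rho"
    using Y(1) by simp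
  have "Max ((\<lambda>l. q powr (-4 * (l \<bullet> weyl_vec \<Phi> t))) ` Y) = q powr (-2 * (y0 \<bullet> two_rho))"
  proof (rule Max_eqI)
    fix x assume "x \<in> (\<lambda>l. q powr (-4 * (l \<bullet> weyl_vec \<Phi> t))) ` Y"
    then obtain y where "y \<in> Y" "x = q powr (-2 * (y \<bullet> two_rho))"
      by (auto simp: weyl_vec_eq)
    then show "x \<le> q powr (-2 * (y0 \<bullet> two_rho))"
      using max q by (simp add: powr_mono')
  qed (use Y(1) y0 in \<open>auto simp: weyl_vec_eq\<close>)
  then show ?thesis
    using ball_size_root_tendsto[OF q Y(3) y0 max] by simp
qed

lemma generating_set_nonempty:
  assumes "generating_set \<Phi> t Y" shows "Y \<noteq> {}"
proof
  assume "Y = {}"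
  then have "products \<Phi> t Y n \<subseteq> {0}" for n by (cases n) auto
  then show False
    using assms two_rho_dominant two_rho_nonzero unfolding generating_set_def by blast
qed

end

theorem proposition6p5:
  fixes \<Phi> :: "'a::euclidean_space set" and t :: 'a and q :: real and Y :: "'a set"
  assumes "root_system \<Phi>" and "short_normalised \<Phi>" and "regular \<Phi> t"
    and "0 < q" and "q < 1"
    and "generating_set \<Phi> t Y"
  shows "(\<lambda>n. ball_size \<Phi> t q Y n powr (1 / real n)) \<longlonglongrightarrow>
           Max ((\<lambda>l. q powr (-4 * (l \<bullet> weyl_vec \<Phi> t))) ` Y)"
proof -
  interpret positive_system \<Phi> t
    using assms(1,3) by unfold_locales
  have "finite Y" "Y \<subseteq> dominant \<Phi> t"
    using assms(6) unfolding generating_set_def by auto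
  moreover have "Y \<noteq> {}"
    using assms(6) by (rule generating_set_nonempty)
  ultimately show ?thesis
    using assms(4,5) by (intro ball_size_root_tendsto_Max) simp_all
qed

end
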